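(* Let $\theta>0$ and suppose $\mathcal A$ is Hurwitz and $\inf_{\lambda\in\mathbb R}\lambda_{\min}(\Delta_\theta(\lambda))>0$. Then the operator $\mathfrak M_{\theta,F}$ satisfies $$\sup_{\lambda\in\mathbb R}\|\mathfrak M_{\theta,F}\|\le\frac{2\,\vartheta_r(2\theta\|F\|_\infty^2)}{\inf_{\lambda\in\mathbb R}\lambda_{\min}(\Delta_\theta(\lambda))},\qquad \vartheta_r(u):=\phi(u)+\sqrt r\,\phi'(u)\,u,$$ where $\|\mathfrak M_{\theta,F}\|$ is the operator norm on $\mathbb C^{r\times m}$ induced by the Frobenius norm, $\phi'$ is the derivative of $\phi$, and $\|F\|_\infty:=\sup_{\lambda\in\mathbb R}\|F(i\lambda)\|$ (spectral norm).
   Context: Let $m,N$ be even, $r\ge1$, $\mathbf J=\begin{bmatrix}0&1\\-1&0\end{bmatrix}$, $J:=I_{m/2}\otimes\mathbf J$, $\Omega:=I_m+iJ$, $S:=\Omega^T/\sqrt2$. For $\mathcal A\in\mathbb R^{N\times N}$, $\mathcal B\in\mathbb R^{N\times m}$, $\mathcal C\in\mathbb R^{r\times N}$: $G(s):=(sI_N-\mathcal A)^{-1}$, $F(s):=\mathcal CG(s)\mathcal B$; for $\lambda\in\mathbb R$ (argument $i\lambda$ suppressed), $\Psi:=FJF^*$; $\phi(u):=(e^u-1)/u=\sum_{k\ge0}u^k/(k+1)!$ applied to matrices via the series; $\Sigma_\theta:=SF^*\phi(2i\theta\Psi)FS$, $\Delta_\theta:=I_m-\theta\Sigma_\theta$.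 $\varpi_\theta:=\Big(\phi\Big(\begin{bmatrix}2i\theta\Psi&0\\ FS\Delta_\theta^{-1}SF^*&2i\theta\Psi\end{bmatrix}\Big)\Big)_{21}$ (bottom-left $r\times r$ block), and $\mathfrak M_{\theta,F}(X):=\phi(2i\theta\Psi)\,X\,S\Delta_\theta^{-1}S+\varpi_\theta\,X\,(2i\theta J)$ for $X\in\mathbb C^{r\times m}$. *)

theory Defs
  imports "HOL-Analysis.Analysis"
begin

(* Matrices are HOL-Analysis matrices  'a^'cols^'rows.  The m-dimensional index set is
   'k \<times> bool (so m = 2 * CARD('k) is even); bool encodes {1,2} via False ~ 1, True ~ 2. *)

definition cmat :: "real^'c^'r \<Rightarrow> complex^'c^'r" where
  "cmat A = (\<chi> i j. complex_of_real (A $ i $ j))"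

definition cadj :: "complex^'c^'r \<Rightarrow> complex^'r^'c" where
  "cadj X = (\<chi> i j. cnj (X $ j $ i))"

primrec matpow :: "'a::semiring_1^'n^'n \<Rightarrow> nat \<Rightarrow> 'a^'n^'n" where
  "matpow A 0 = mat 1"
| "matpow A (Suc k) = A ** matpow A k"

text \<open>phi(u) = (e^u - 1)/u = sum_k u^k/(k+1)!, scalar and matrix versions (via the series).\<close>
definition phi :: "real \<Rightarrow> real" where
  "phi u = (\<Sum>k. u ^ k / fact (k + 1))"

definition mphi :: "complex^'n^'n \<Rightarrow> complex^'n^'n" where
  "mphi X = (\<Sum>k. (1 / fact (k + 1)) *\<^sub>R matpow X k)"

text \<open>The 2x2 block J and J = I_{m/2} (Kronecker) J.\<close>
definition Jblk :: "bool \<Rightarrow> bool \<Rightarrow> real" where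
  "Jblk a b = (if \<not> a \<and> b then 1 else if a \<and> \<not> b then -1 else 0)"

definition Jmat :: "complex^('k::finite \<times> bool)^('k \<times> bool)" where
  "Jmat = (\<chi> u v. if fst u = fst v then complex_of_real (Jblk (snd u) (snd v)) else 0)"

definition Omega :: "complex^('k::finite \<times> bool)^('k \<times> bool)" where
  "Omega = mat 1 + mat \<i> ** Jmat"

definition Smat :: "complex^('k::finite \<times> bool)^('k \<times> bool)" where
  "Smat = (1 / sqrt 2) *\<^sub>R transpose Omega"

definition lambda_min :: "complex^'n^'n \<Rightarrow> real" where
  "lambda_min A = Inf {x::real. \<exists>v. v \<noteq> 0 \<and> A *v v = complex_of_real x *s v}"

definition hurwitz :: "real^'n^'n \<Rightarrow> bool" where
  "hurwitz A \<longleftrightarrow> (\<forall>c v. v \<noteq> 0 \<and> cmat A *v v = c *s v \<longrightarrow> Re c < 0)"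

definition Gfun :: "real^'n^'n \<Rightarrow> complex \<Rightarrow> complex^'n^'n" where
  "Gfun A s = matrix_inv (mat s - cmat A)"

definition Ffun :: "real^'n^'n \<Rightarrow> real^'m^'n \<Rightarrow> real^'n^'r \<Rightarrow> real \<Rightarrow> complex^'m^'r" where
  "Ffun A B C w = cmat C ** Gfun A (\<i> * complex_of_real w) ** cmat B"

definition Psi :: "complex^('k::finite \<times> bool)^'r \<Rightarrow> complex^'r::finite^'r" where
  "Psi F = F ** Jmat ** cadj F"

definition Sigma :: "real \<Rightarrow> complex^('k::finite \<times> bool)^'r \<Rightarrow> complex^('k::finite \<times> bool)^('k \<times> bool)" where
  "Sigma \<theta> F = Smat ** cadj F ** mphi (mat (2 * \<i> * complex_of_real \<theta>) ** Psi F) ** F ** Smat"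

definition Delta :: "real \<Rightarrow> complex^('k::finite \<times> bool)^'r \<Rightarrow> complex^('k::finite \<times> bool)^('k \<times> bool)" where
  "Delta \<theta> F = mat 1 - mat (complex_of_real \<theta>) ** Sigma \<theta> F"

definition blockM :: "real \<Rightarrow> complex^('k::finite \<times> bool)^'r \<Rightarrow> complex^('r::finite + 'r)^('r + 'r)" where
  "blockM \<theta> F = (let P = mat (2 * \<i> * complex_of_real \<theta>) ** Psi F;
                      Q = F ** Smat ** matrix_inv (Delta \<theta> F) ** Smat ** cadj F in
     (\<chi> u v. case (u, v) of
         (Inl i, Inl j) \<Rightarrow> P $ i $ j
       | (Inl i, Inr j) \<Rightarrow> 0
       | (Inr i, Inl j) \<Rightarrow> Q $ i $ j
       | (Inr i, Inr j) \<Rightarrow> P $ i $ j))"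

definition varpi :: "real \<Rightarrow> complex^('k::finite \<times> bool)^'r \<Rightarrow> complex^'r::finite^'r" where
  "varpi \<theta> F = (\<chi> i j. mphi (blockM \<theta> F) $ Inr i $ Inl j)"

definition Mop :: "real \<Rightarrow> complex^('k::finite \<times> bool)^'r \<Rightarrow> complex^('k::finite \<times> bool)^'r \<Rightarrow> complex^('k::finite \<times> bool)^'r" where
  "Mop \<theta> F X = mphi (mat (2 * \<i> * complex_of_real \<theta>) ** Psi F) ** X ** Smat ** matrix_inv (Delta \<theta> F) ** Smat
              + varpi \<theta> F ** X ** (mat (2 * \<i> * complex_of_real \<theta>) ** Jmat)"

definition vartheta :: "nat \<Rightarrow> real \<Rightarrow> real" where
  "vartheta r u = phi u + sqrt (real r) * deriv phi u * u"

end

theory Submission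
  imports Defs
begin

text \<open>
The operator is a sum of two maps X \<mapsto> U X V, whose norm for the Frobenius norm is at most
the product of the spectral norms of U and V. Comparing power series coefficientwise gives
\<parallel>\<phi>(P)\<parallel> \<le> \<phi>(\<parallel>P\<parallel>) for P = 2i\<theta>\<Psi>, and \<parallel>P\<parallel> \<le> 2\<theta>\<parallel>F\<parallel>^2. For the block matrix
N = [[P, 0], [Q, P]] the lower left block of N^k is a sum of k products P^i Q P^j, so the
corresponding block of \<phi>(N) has norm at most \<phi>'(\<parallel>P\<parallel>) \<parallel>Q\<parallel>. As \<Psi> is skew-Hermitian,
P, \<Sigma> and \<Delta> are Hermitian, hence \<parallel>\<Delta>^-1\<parallel> \<le> 1 / \<lambda>_min(\<Delta>). With \<parallel>S\<parallel> \<le> \<surd>2 and \<parallel>J\<parallel> \<le> 1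
this gives the bound 2 (\<phi>(a) + a \<phi>'(a)) / L for a = 2\<theta>\<parallel>F\<parallel>_\<infinity>^2, which is stronger than
claimed because \<surd>r \<ge> 1. Stability of A keeps F(i\<lambda>) bounded, which makes the supremum and the
infimum in the bound meaningful.
\<close>

definition phi_coeff :: "nat \<Rightarrow> real" where
  "phi_coeff k = 1 / fact (k + 1)"

lemma phi_coeff_nonneg: "0 \<le> phi_coeff k"
  by (simp add: phi_coeff_def)

lemma summable_phi_series: "summable (\<lambda>n. phi_coeff n * y ^ n)"
proof (rule summable_comparison_test'[OF summable_exp[of "\<bar>y\<bar>"]])
  fix n :: nat
  have "fact n \<le> (fact (n + 1) :: real)"
    by (intro fact_mono) auto
  hence "phi_coeff n \<le> inverse (fact n)"
    by (simp add: phi_coeff_def divide_simps)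
  thus "norm (phi_coeff n * y ^ n) \<le> inverse (fact n) * \<bar>y\<bar> ^ n"
    by (simp add: abs_mult power_abs phi_coeff_nonneg mult_right_mono)
qed

lemma phi_eq_suminf: "phi = (\<lambda>x. \<Sum>n. phi_coeff n * x ^ n)"
  by (simp add: fun_eq_iff phi_def phi_coeff_def)

lemma phi_sums: "(\<lambda>n. phi_coeff n * x ^ n) sums phi x"
  unfolding phi_eq_suminf using summable_phi_series summable_sums by blast

lemma deriv_phi_eq_suminf: "deriv phi x = (\<Sum>n. diffs phi_coeff n * x ^ n)"
  unfolding phi_eq_suminf
  by (rule DERIV_imp_deriv[OF termdiffs_strong_converges_everywhere[OF summable_phi_series]])

lemma summable_deriv_phi_series: "summable (\<lambda>n. diffs phi_coeff n * x ^ n)"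
  by (rule termdiff_converges_all[OF summable_phi_series])

lemma deriv_phi_sums: "(\<lambda>n. of_nat n * phi_coeff n * x ^ (n - 1)) sums deriv phi x"
  unfolding deriv_phi_eq_suminf using diffs_equiv[OF summable_deriv_phi_series] by simp

lemma diffs_phi_coeff_nonneg: "0 \<le> diffs phi_coeff n"
  by (simp add: diffs_def phi_coeff_def)

lemma phi_nonneg: "0 \<le> p \<Longrightarrow> 0 \<le> phi p"
  unfolding phi_eq_suminf
  by (intro suminf_nonneg summable_phi_series allI mult_nonneg_nonneg phi_coeff_nonneg zero_le_power)

lemma deriv_phi_nonneg: "0 \<le> p \<Longrightarrow> 0 \<le> deriv phi p"
  unfolding deriv_phi_eq_suminf
  by (intro suminf_nonneg summable_deriv_phi_series allI mult_nonneg_nonneg diffs_phi_coeff_nonneg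
      zero_le_power)

lemma phi_mono: "0 \<le> p \<Longrightarrow> p \<le> a \<Longrightarrow> phi p \<le> phi a"
  unfolding phi_eq_suminf
  by (intro suminf_le summable_phi_series allI mult_left_mono power_mono phi_coeff_nonneg)

lemma deriv_phi_mono: "0 \<le> p \<Longrightarrow> p \<le> a \<Longrightarrow> deriv phi p \<le> deriv phi a"
  unfolding deriv_phi_eq_suminf
  by (intro suminf_le summable_deriv_phi_series allI mult_left_mono power_mono diffs_phi_coeff_nonneg)

lemma phi_add_deriv_le_vartheta:
  assumes "0 \<le> p" "p \<le> a" "0 \<le> b" "b \<le> a" "1 \<le> r"
  shows "phi p + deriv phi p * b \<le> vartheta r a"
proof -
  have "deriv phi p * b \<le> deriv phi a * a"
    using assms by (intro mult_mono deriv_phi_mono deriv_phi_nonneg) auto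
  also have "\<dots> \<le> sqrt (real r) * (deriv phi a * a)"
    using mult_right_mono[of 1 "sqrt (real r)" "deriv phi a * a"] assms deriv_phi_nonneg[of a]
    by simp
  finally show ?thesis
    using phi_mono[of p a] assms by (simp add: vartheta_def mult.assoc)
qed

text \<open>On matrices \<open>norm\<close> is the Frobenius norm; \<open>opnorm\<close> is the spectral norm.\<close>

definition opnorm :: "complex^'c^'r \<Rightarrow> real" where
  "opnorm M = onorm ((*v) M)"

lemma norm_matrix_vector_le: "norm (M *v v) \<le> opnorm M * norm v"
  unfolding opnorm_def by (rule onorm[OF matrix_vector_mul_bounded_linear])

lemma opnorm_le: "(\<And>v. norm (M *v v) \<le> b * norm v) \<Longrightarrow> opnorm M \<le> b"
  unfolding opnorm_def by (rule onorm_le)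

lemma matrix_vector_mult_scaleR: "A *v (c *\<^sub>R x) = c *\<^sub>R (A *v (x::complex^'n))"
  using matrix_vector_mul_linear[of A] by (simp add: linear_iff)

lemma norm_matrix_vector_ge_of_sphere:
  assumes "\<And>v. norm v = 1 \<Longrightarrow> c \<le> norm (M *v v)"
  shows "c * norm v \<le> norm (M *v (v::complex^'n))"
proof (cases "v = 0")
  case False
  have "c \<le> norm (M *v ((1 / norm v) *\<^sub>R v))"
    using assms[of "(1 / norm v) *\<^sub>R v"] False by simp
  then show ?thesis
    using False by (simp add: matrix_vector_mult_scaleR field_simps)
qed simp

lemma opnorm_nonneg: "0 \<le> opnorm M"
  unfolding opnorm_def by (rule onorm_pos_le[OF matrix_vector_mul_bounded_linear])

lemma opnorm_mult: "opnorm (A ** B) \<le> opnorm A * opnorm B"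
proof (rule opnorm_le)
  fix v
  have "norm ((A ** B) *v v) = norm (A *v (B *v v))"
    by (simp add: matrix_vector_mul_assoc)
  also have "\<dots> \<le> opnorm A * (opnorm B * norm v)"
    by (intro order_trans[OF norm_matrix_vector_le] mult_left_mono norm_matrix_vector_le opnorm_nonneg)
  finally show "norm ((A ** B) *v v) \<le> opnorm A * opnorm B * norm v"
    by (simp add: mult.assoc)
qed

lemma opnorm_mult3: "opnorm (A ** B ** C) \<le> opnorm A * opnorm B * opnorm C"
  by (meson mult_right_mono opnorm_mult opnorm_nonneg order_trans)

lemma opnorm_mult5:
  "opnorm (A ** B ** C ** D ** E) \<le> opnorm A * opnorm B * opnorm C * opnorm D * opnorm E"
  by (meson mult_right_mono opnorm_mult opnorm_mult3 opnorm_nonneg order_trans)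

lemma opnorm_add: "opnorm (A + B) \<le> opnorm A + opnorm B"
proof (rule opnorm_le)
  fix v
  have "norm ((A + B) *v v) = norm (A *v v + B *v v)"
    by (simp add: matrix_vector_mult_add_rdistrib)
  also have "\<dots> \<le> opnorm A * norm v + opnorm B * norm v"
    by (intro order_trans[OF norm_triangle_ineq] add_mono norm_matrix_vector_le)
  finally show "norm ((A + B) *v v) \<le> (opnorm A + opnorm B) * norm v"
    by (simp add: algebra_simps)
qed

lemma opnorm_diff: "opnorm (A - B) \<le> opnorm A + opnorm B"
proof (rule opnorm_le)
  fix v
  have "norm ((A - B) *v v) = norm (A *v v - B *v v)"
    by (simp add: matrix_vector_mult_diff_rdistrib)
  also have "\<dots> \<le> opnorm A * norm v + opnorm B * norm v"
    by (intro order_trans[OF norm_triangle_ineq4] add_mono norm_matrix_vector_le)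
  finally show "norm ((A - B) *v v) \<le> (opnorm A + opnorm B) * norm v"
    by (simp add: algebra_simps)
qed

lemma norm_vec_power2: "(norm (x::'a::real_normed_vector^'n))\<^sup>2 = (\<Sum>i\<in>UNIV. (norm (x $ i))\<^sup>2)"
  by (simp add: norm_vec_def L2_set_def sum_nonneg)

lemma norm_vector_smult: "norm ((c::complex) *s (x::complex^'n)) = norm c * norm x"
  by (simp add: norm_vec_def norm_mult L2_set_right_distrib)

lemma mat_mult_eq: "mat c ** M = (\<chi> i j. c * M $ i $ j)"
  by (simp add: matrix_matrix_mult_def mat_def vec_eq_iff if_distrib if_distribR sum.delta'
      cong: if_cong)

lemma mult_mat_eq: "M ** mat c = (\<chi> i j. M $ i $ j * c)"
  by (simp add: matrix_matrix_mult_def mat_def vec_eq_iff if_distrib if_distribR sum.delta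
      cong: if_cong)

lemma mat_mult_commute: "mat (c::complex) ** M = M ** mat c"
  by (simp add: mat_mult_eq mult_mat_eq mult.commute)

lemma mat_vector_mult: "mat c *v v = c *s (v::complex^'n)"
  by (simp add: matrix_vector_mult_def mat_def vec_eq_iff if_distrib if_distribR sum.delta
      cong: if_cong)

lemma opnorm_mat_mult: "opnorm (mat (c::complex) ** M) \<le> norm c * opnorm M"
  by (rule opnorm_le)
    (simp add: matrix_vector_mul_assoc[symmetric] mat_vector_mult norm_vector_smult mult.assoc
      mult_left_mono norm_matrix_vector_le)

lemma opnorm_mat: "opnorm (mat (c::complex) :: complex^'n^'n) \<le> norm c"
  by (rule opnorm_le) (simp add: mat_vector_mult norm_vector_smult)

lemma scaleR_matrix_vector_mult: "((r::real) *\<^sub>R M) *v (v::complex^'n) = r *\<^sub>R (M *v v)"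
  by (simp add: vec_eq_iff matrix_vector_mult_def scaleR_sum_right)

lemma opnorm_scaleR: "opnorm ((r::real) *\<^sub>R M) \<le> \<bar>r\<bar> * opnorm M"
  by (rule opnorm_le)
    (simp add: scaleR_matrix_vector_mult mult.assoc mult_left_mono norm_matrix_vector_le)

lemma matrix_mult_uminus_left: "(- A::complex^'c^'r) ** B = - (A ** (B::complex^'d^'c))"
  by (simp add: matrix_matrix_mult_def vec_eq_iff sum_negf)

lemma matrix_mult_uminus_right: "(A::complex^'c^'r) ** (- B) = - (A ** (B::complex^'d^'c))"
  by (simp add: matrix_matrix_mult_def vec_eq_iff sum_negf)

lemma row_matrix_mult: "(X ** B) $ i = transpose B *v ((X::complex^'c^'r) $ i)"
  by (auto simp: matrix_matrix_mult_def matrix_vector_mult_def transpose_def vec_eq_iff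
      mult.commute intro!: sum.cong)

lemma norm_matrix_mult_right_le:
  "norm (X ** B) \<le> norm (X::complex^'c^'r) * opnorm (transpose (B::complex^'d^'c))"
proof -
  have "norm (X ** B) = L2_set (\<lambda>i. norm (transpose B *v X $ i)) UNIV"
    by (simp add: norm_vec_def row_matrix_mult)
  also have "\<dots> \<le> L2_set (\<lambda>i. opnorm (transpose B) * norm (X $ i)) UNIV"
    by (intro L2_set_mono norm_matrix_vector_le) auto
  also have "\<dots> = opnorm (transpose B) * norm X"
    by (simp add: norm_vec_def L2_set_right_distrib opnorm_nonneg)
  finally show ?thesis
    by (simp add: mult.commute)
qed

lemma norm_transpose: "norm (transpose (X::complex^'c^'r)) = norm X"
proof -
  have "(norm (transpose X))\<^sup>2 = (norm X)\<^sup>2"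
    by (simp add: norm_vec_power2 transpose_def) (rule sum.swap)
  thus ?thesis
    by (simp add: power2_eq_iff_nonneg)
qed

lemma norm_matrix_mult_left_le: "norm (A ** X) \<le> opnorm (A::complex^'c^'r) * norm (X::complex^'d^'c)"
  using norm_matrix_mult_right_le[of "transpose X" "transpose A"]
  by (simp add: matrix_transpose_mul norm_transpose mult.commute flip: norm_transpose[of "A ** X"])

lemma norm_sandwich_le: "norm (A ** X ** B) \<le> opnorm A * norm X * opnorm (transpose B)"
  by (meson mult_right_mono norm_matrix_mult_left_le norm_matrix_mult_right_le opnorm_nonneg
      order_trans)

lemma inner_vec_complex: "(u::complex^'n) \<bullet> v = Re (\<Sum>i\<in>UNIV. u $ i * cnj (v $ i))"
  by (simp add: inner_vec_def inner_complex_def)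

lemma cadj_inner: "(cadj M *v u) \<bullet> v = u \<bullet> (M *v (v::complex^'c))"
proof -
  have "(\<Sum>i\<in>UNIV. (cadj M *v u) $ i * cnj (v $ i)) = (\<Sum>j\<in>UNIV. u $ j * cnj ((M *v v) $ j))"
    unfolding cadj_def matrix_vector_mult_def
    by (simp add: sum_distrib_left sum_distrib_right mult_ac) (rule sum.swap)
  thus ?thesis
    by (simp add: inner_vec_complex)
qed

lemma opnorm_cadj: "opnorm (cadj M) \<le> opnorm M"
proof (rule opnorm_le)
  fix u
  define y where "y = cadj M *v u"
  have "norm y * norm y = y \<bullet> y"
    by (simp add: power2_norm_eq_inner flip: power2_eq_square)
  also have "\<dots> = u \<bullet> (M *v y)"
    unfolding y_def by (rule cadj_inner)
  also have "\<dots> \<le> norm u * (opnorm M * norm y)"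
    by (intro order_trans[OF norm_cauchy_schwarz] mult_left_mono norm_matrix_vector_le) auto
  finally have "norm y * norm y \<le> (opnorm M * norm u) * norm y"
    by (simp add: mult_ac)
  thus "norm (cadj M *v u) \<le> opnorm M * norm u"
    using opnorm_nonneg[of M] by (cases "y = 0") (auto simp: y_def mult_le_cancel_right)
qed

lemma transpose_vector_mult_cnj:
  "transpose M *v u = (\<chi> i. cnj ((cadj M *v (\<chi> j. cnj (u $ j))) $ i))"
  by (simp add: cadj_def transpose_def matrix_vector_mult_def vec_eq_iff)

lemma opnorm_transpose: "opnorm (transpose (M::complex^'c^'r)) \<le> opnorm M"
proof (rule opnorm_le)
  fix u :: "complex^'r"
  define u' :: "complex^'r" where "u' = (\<chi> j. cnj (u $ j))"
  have "norm (transpose M *v u) = norm (cadj M *v u')"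
    unfolding u'_def by (simp only: transpose_vector_mult_cnj) (simp add: norm_vec_def)
  also have "\<dots> \<le> opnorm M * norm u'"
    by (intro order_trans[OF norm_matrix_vector_le] mult_right_mono opnorm_cadj) auto
  also have "norm u' = norm u"
    by (simp add: u'_def norm_vec_def)
  finally show "norm (transpose M *v u) \<le> opnorm M * norm u" .
qed

lemma cadj_mult: "cadj (A ** B) = cadj B ** cadj (A::complex^'c^'r)"
  by (simp add: cadj_def matrix_matrix_mult_def vec_eq_iff mult.commute)

lemma cadj_cadj [simp]: "cadj (cadj A) = A"
  by (simp add: cadj_def vec_eq_iff)

lemma cadj_add: "cadj (A + B) = cadj A + cadj B"
  by (simp add: cadj_def vec_eq_iff)

lemma cadj_diff: "cadj (A - B) = cadj A - cadj B"
  by (simp add: cadj_def vec_eq_iff)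

lemma cadj_mat: "cadj (mat c) = mat (cnj c)"
  by (simp add: cadj_def mat_def vec_eq_iff)

lemma cadj_mat_mult: "cadj (mat c ** X) = mat (cnj c) ** cadj (X::complex^'c^'r)"
  by (simp add: cadj_def mat_mult_eq vec_eq_iff)

lemma bounded_linear_cadj: "bounded_linear (cadj :: complex^'c^'r \<Rightarrow> complex^'r^'c)"
  by (simp add: linear_conv_bounded_linear[symmetric])
    (rule linearI, simp_all add: cadj_def vec_eq_iff)

definition hermitian :: "complex^'n^'n \<Rightarrow> bool" where
  "hermitian H \<longleftrightarrow> cadj H = H"

lemma hermitian_inner_commute: "hermitian H \<Longrightarrow> (H *v u) \<bullet> v = u \<bullet> (H *v v)"
  using cadj_inner[of H u v] by (simp add: hermitian_def)

lemma scaleR_conv_vector_smult: "(r::real) *\<^sub>R (v::complex^'n) = complex_of_real r *s v"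
  by (rule vec_eq_iff[THEN iffD2], rule allI)
    (metis vector_scaleR_component scaleR_conv_of_real vector_smult_component)

text \<open>Perturbing \<open>u\<close> in the direction \<open>H u\<close> would make the quadratic form negative.\<close>

lemma psd_hermitian_form_zero_imp_kernel:
  fixes H :: "complex^'n^'n"
  assumes herm: "hermitian H" and psd: "\<And>v. 0 \<le> (H *v v) \<bullet> v" and zero: "(H *v u) \<bullet> u = 0"
  shows "H *v u = 0"
proof (rule ccontr)
  assume "H *v u \<noteq> 0"
  define w where "w = H *v u"
  define b where "b = w \<bullet> w"
  define c where "c = (H *v w) \<bullet> w"
  have bpos: "b > 0"
    using \<open>H *v u \<noteq> 0\<close> by (simp add: b_def w_def)
  have c0: "0 \<le> c"
    unfolding c_def by (rule psd)
  have form: "(H *v (u + t *\<^sub>R w)) \<bullet> (u + t *\<^sub>R w) = 2 * t * b + t\<^sup>2 * c" for t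
  proof -
    have "u \<bullet> w = 0"
      using zero by (simp add: w_def inner_commute)
    moreover have "(H *v w) \<bullet> u = b"
      using hermitian_inner_commute[OF herm, of w u] by (simp add: b_def w_def inner_commute)
    ultimately show ?thesis
      by (simp add: matrix_vector_right_distrib matrix_vector_mult_scaleR inner_add_left
          inner_add_right zero flip: w_def)
        (simp add: b_def c_def power2_eq_square inner_commute algebra_simps)
  qed
  define t where "t = - b / (c + 1)"
  have "t * (c + 1) = - b"
    using c0 by (simp add: t_def)
  have "(c + 1)\<^sup>2 * (2 * t * b + t\<^sup>2 * c) = 2 * (t * (c + 1)) * b * (c + 1) + (t * (c + 1))\<^sup>2 * c"
    by (simp add: algebra_simps power2_eq_square)
  also have "\<dots> = - (b\<^sup>2 * c + 2 * b\<^sup>2)"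
    by (simp only: \<open>t * (c + 1) = - b\<close>) (simp add: power2_eq_square algebra_simps)
  also have "\<dots> < 0"
    using bpos c0 by (smt (verit) mult_nonneg_nonneg zero_less_power)
  finally have "2 * t * b + t\<^sup>2 * c < 0"
    using c0 by (simp add: mult_less_0_iff)
  with psd[of "u + t *\<^sub>R w"] form[of t] show False
    by simp
qed

lemma hermitian_Rayleigh_minimum:
  fixes H :: "complex^'n^'n"
  assumes herm: "hermitian H"
  obtains u m where "norm u = 1" "H *v u = complex_of_real m *s u"
    "\<And>v. m * (norm v)\<^sup>2 \<le> (H *v v) \<bullet> v"
proof -
  have "\<exists>x\<in>sphere 0 1. \<forall>y\<in>sphere 0 1. (H *v x) \<bullet> x \<le> (H *v y) \<bullet> (y::complex^'n)"
    by (intro continuous_attains_inf compact_sphere continuous_intros) auto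
  then obtain u where u: "norm u = 1"
    and min: "\<And>y. norm y = 1 \<Longrightarrow> (H *v u) \<bullet> u \<le> (H *v y) \<bullet> y"
    by auto
  define m where "m = (H *v u) \<bullet> u"
  have lower: "m * (norm v)\<^sup>2 \<le> (H *v v) \<bullet> v" for v
  proof (cases "v = 0")
    case False
    have "m \<le> (H *v ((1 / norm v) *\<^sub>R v)) \<bullet> ((1 / norm v) *\<^sub>R v)"
      unfolding m_def by (rule min) (use False in simp)
    also have "\<dots> = ((H *v v) \<bullet> v) / (norm v)\<^sup>2"
      by (simp add: matrix_vector_mult_scaleR power2_eq_square)
    finally show ?thesis
      using False by (simp add: field_simps)
  qed simp
  define H' where "H' = H - mat (complex_of_real m)"
  have H'v: "H' *v v = H *v v - m *\<^sub>R v" for v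
    by (simp add: H'_def matrix_vector_mult_diff_rdistrib mat_vector_mult scaleR_conv_vector_smult)
  have "H' *v u = 0"
  proof (rule psd_hermitian_form_zero_imp_kernel)
    show "hermitian H'"
      using herm by (simp add: hermitian_def H'_def cadj_diff cadj_mat)
    show "0 \<le> (H' *v v) \<bullet> v" for v
      using lower[of v] by (simp add: H'v inner_diff_left power2_norm_eq_inner)
    show "(H' *v u) \<bullet> u = 0"
      using u by (simp add: H'v inner_diff_left m_def flip: power2_norm_eq_inner)
  qed
  hence "H *v u = complex_of_real m *s u"
    by (simp add: H'v scaleR_conv_vector_smult)
  with u lower that show ?thesis
    by blast
qed

lemma hermitian_lambda_min:
  fixes H :: "complex^'n^'n"
  assumes herm: "hermitian H"
  shows hermitian_lambda_min_le_form: "lambda_min H * (norm v)\<^sup>2 \<le> (H *v v) \<bullet> v"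
    and hermitian_lambda_min_ge: "- opnorm H \<le> lambda_min H"
proof -
  obtain u m where u: "norm u = 1" and eig: "H *v u = complex_of_real m *s u"
    and lower: "\<And>v. m * (norm v)\<^sup>2 \<le> (H *v v) \<bullet> v"
    using hermitian_Rayleigh_minimum[OF herm] by blast
  have m_le: "m \<le> x" if "v \<noteq> 0" "H *v v = complex_of_real x *s v" for x v
    using lower[of v] that by (simp flip: scaleR_conv_vector_smult add: power2_norm_eq_inner)
  have "lambda_min H = m"
    unfolding lambda_min_def using u eig m_le by (intro cInf_eq_minimum) (auto intro!: exI[of _ u])
  then show "lambda_min H * (norm v)\<^sup>2 \<le> (H *v v) \<bullet> v"
    using lower by simp
  have "m = (H *v u) \<bullet> u"
    using eig u by (simp flip: scaleR_conv_vector_smult power2_norm_eq_inner)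
  moreover have "- (norm (H *v u) * norm u) \<le> (H *v u) \<bullet> u"
    using norm_cauchy_schwarz[of "- (H *v u)" u] by simp
  moreover have "norm (H *v u) * norm u \<le> opnorm H"
    using norm_matrix_vector_le[of H u] u by simp
  ultimately show "- opnorm H \<le> lambda_min H"
    using \<open>lambda_min H = m\<close> by linarith
qed

lemma hermitian_lambda_min_norm_le:
  fixes H :: "complex^'n^'n"
  assumes "hermitian H"
  shows "lambda_min H * norm v \<le> norm (H *v v)"
proof (cases "v = 0")
  case False
  have "lambda_min H * (norm v)\<^sup>2 \<le> norm (H *v v) * norm v"
    using hermitian_lambda_min_le_form[OF assms, of v] norm_cauchy_schwarz[of "H *v v" v]
    by linarith
  thus ?thesis
    using False by (simp add: power2_eq_square mult_le_cancel_right)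
qed simp

lemma opnorm_matrix_inv_le:
  fixes M :: "complex^'n^'n"
  assumes L: "L > 0" and lower: "\<And>v. L * norm v \<le> norm (M *v v)"
  shows "opnorm (matrix_inv M) \<le> 1 / L"
proof -
  have "x = 0" if "M *v x = 0" for x
    using lower[of x] L that by (simp add: mult_le_0_iff)
  then have "invertible M"
    by (simp add: invertible_left_inverse matrix_left_invertible_ker)
  then have right_inverse: "M ** matrix_inv M = mat 1"
    unfolding invertible_def matrix_inv_def by (rule conjunct1[OF someI_ex])
  show ?thesis
  proof (rule opnorm_le)
    fix v
    have "L * norm (matrix_inv M *v v) \<le> norm v"
      using lower[of "matrix_inv M *v v"] right_inverse by (simp add: matrix_vector_mul_assoc)
    thus "norm (matrix_inv M *v v) \<le> 1 / L * norm v"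
      using L by (simp add: field_simps mult.commute)
  qed
qed

lemma matpow_commute: "matpow X k ** X = X ** matpow X k"
  by (induction k) (simp_all add: matrix_mul_assoc[symmetric])

lemma opnorm_matpow: "opnorm (matpow (X::complex^'n^'n) k) \<le> opnorm X ^ k"
proof (induction k)
  case 0
  show ?case
    using opnorm_mat[of 1] by simp
next
  case (Suc k)
  have "opnorm (matpow X (Suc k)) \<le> opnorm X * opnorm (matpow X k)"
    by (simp add: opnorm_mult)
  also have "\<dots> \<le> opnorm X * opnorm X ^ k"
    by (intro mult_left_mono Suc opnorm_nonneg)
  finally show ?case
    by simp
qed

lemma norm_matpow_le: "norm (matpow (X::complex^'n^'n) k) \<le> opnorm X ^ k * norm (mat 1 :: complex^'n^'n)"
proof (induction k)
  case (Suc k)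
  have "norm (matpow X (Suc k)) \<le> opnorm X * norm (matpow X k)"
    by (simp add: norm_matrix_mult_left_le)
  also have "\<dots> \<le> opnorm X * (opnorm X ^ k * norm (mat 1 :: complex^'n^'n))"
    by (intro mult_left_mono Suc opnorm_nonneg)
  finally show ?case
    by (simp add: mult_ac)
qed simp

lemma mphi_sums: "(\<lambda>k. phi_coeff k *\<^sub>R matpow (X::complex^'n^'n) k) sums mphi X"
proof -
  have "summable (\<lambda>k. phi_coeff k *\<^sub>R matpow X k)"
  proof (rule summable_comparison_test)
    show "\<exists>N. \<forall>n\<ge>N. norm (phi_coeff n *\<^sub>R matpow X n) \<le> phi_coeff n * opnorm X ^ n * norm (mat 1 :: complex^'n^'n)"
      using norm_matpow_le[of X] by (auto simp: phi_coeff_nonneg mult.assoc intro!: mult_left_mono)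
    show "summable (\<lambda>n. phi_coeff n * opnorm X ^ n * norm (mat 1 :: complex^'n^'n))"
      by (intro summable_mult2 summable_phi_series)
  qed
  then show ?thesis
    by (simp add: mphi_def phi_coeff_def summable_sums)
qed

lemma mphi_vector_sums: "(\<lambda>k. phi_coeff k *\<^sub>R (matpow (X::complex^'n^'n) k *v v)) sums (mphi X *v v)"
proof -
  have "bounded_linear (\<lambda>M::complex^'n^'n. M *v v)"
    by (simp add: linear_conv_bounded_linear[symmetric])
      (rule linearI, simp_all add: matrix_vector_mult_add_rdistrib scaleR_matrix_vector_mult)
  from bounded_linear.sums[OF this mphi_sums[of X]] show ?thesis
    by (simp add: scaleR_matrix_vector_mult)
qed

lemma opnorm_mphi: "opnorm (mphi (X::complex^'n^'n)) \<le> phi (opnorm X)"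
proof (rule opnorm_le)
  fix v :: "complex^'n"
  have "norm (phi_coeff k *\<^sub>R (matpow X k *v v)) \<le> phi_coeff k * opnorm X ^ k * norm v" for k
  proof -
    have "norm (matpow X k *v v) \<le> opnorm X ^ k * norm v"
      by (intro order_trans[OF norm_matrix_vector_le] mult_right_mono opnorm_matpow) auto
    thus ?thesis
      by (simp add: phi_coeff_nonneg mult.assoc mult_left_mono)
  qed
  then show "norm (mphi X *v v) \<le> phi (opnorm X) * norm v"
    by (intro norm_sums_le[OF mphi_vector_sums sums_mult2[OF phi_sums]])
qed

lemma cadj_matpow: "cadj (matpow X k) = matpow (cadj X) k"
  by (induction k) (simp_all add: cadj_mat cadj_mult matpow_commute)

lemma cadj_mphi: "cadj (mphi (X::complex^'n^'n)) = mphi (cadj X)"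
proof -
  have "(\<lambda>k. cadj (phi_coeff k *\<^sub>R matpow X k)) sums cadj (mphi X)"
    by (rule bounded_linear.sums[OF bounded_linear_cadj mphi_sums])
  hence "(\<lambda>k. phi_coeff k *\<^sub>R matpow (cadj X) k) sums cadj (mphi X)"
    by (simp add: linear_simps(5)[OF bounded_linear_cadj] cadj_matpow)
  thus ?thesis
    using mphi_sums[of "cadj X"] sums_unique2 by blast
qed

lemma hermitian_mphi: "hermitian X \<Longrightarrow> hermitian (mphi X)"
  by (simp add: hermitian_def cadj_mphi)

lemma sum_UNIV_Plus:
  "(\<Sum>u\<in>(UNIV::('a::finite + 'b::finite) set). f u) = (\<Sum>i\<in>UNIV. f (Inl i)) + (\<Sum>i\<in>UNIV. f (Inr i))"
  by (subst UNIV_Plus_UNIV[symmetric], subst sum.Plus) auto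

definition upper_half :: "complex^('r::finite + 'r) \<Rightarrow> complex^'r" where
  "upper_half z = (\<chi> i. z $ Inl i)"

definition lower_half :: "complex^('r::finite + 'r) \<Rightarrow> complex^'r" where
  "lower_half z = (\<chi> i. z $ Inr i)"

definition embed_upper :: "complex^'r::finite \<Rightarrow> complex^('r + 'r)" where
  "embed_upper u = (\<chi> z. case z of Inl j \<Rightarrow> u $ j | Inr j \<Rightarrow> 0)"

lemma bounded_linear_lower_half: "bounded_linear (lower_half :: complex^('r::finite + 'r) \<Rightarrow> complex^'r)"
  by (simp add: linear_conv_bounded_linear[symmetric])
    (rule linearI, simp_all add: lower_half_def vec_eq_iff)

locale block_lower_triangular =
  fixes N :: "complex^('r::finite + 'r)^('r + 'r)" and P Q :: "complex^'r^'r"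
  assumes upper_left: "\<And>i j. N $ Inl i $ Inl j = P $ i $ j"
    and upper_right: "\<And>i j. N $ Inl i $ Inr j = 0"
    and lower_left: "\<And>i j. N $ Inr i $ Inl j = Q $ i $ j"
    and lower_right: "\<And>i j. N $ Inr i $ Inr j = P $ i $ j"
begin

lemma upper_half_mult: "upper_half (N *v z) = P *v upper_half z"
  by (simp add: upper_half_def matrix_vector_mult_def vec_eq_iff sum_UNIV_Plus upper_left upper_right)

lemma lower_half_mult: "lower_half (N *v z) = Q *v upper_half z + P *v lower_half z"
  by (simp add: upper_half_def lower_half_def matrix_vector_mult_def vec_eq_iff sum_UNIV_Plus
      lower_left lower_right)

lemma norm_matpow_embed_upper_le:
  "norm (upper_half (matpow N k *v embed_upper u)) \<le> opnorm P ^ k * norm u \<and>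
   norm (lower_half (matpow N k *v embed_upper u)) \<le> real k * opnorm P ^ (k - 1) * opnorm Q * norm u"
proof (induction k)
  case 0
  have "upper_half (embed_upper u) = u" "lower_half (embed_upper u) = 0"
    by (simp_all add: upper_half_def lower_half_def embed_upper_def vec_eq_iff)
  thus ?case
    by simp
next
  case (Suc k)
  define z where "z = matpow N k *v embed_upper u"
  have up: "norm (upper_half z) \<le> opnorm P ^ k * norm u"
    and low: "norm (lower_half z) \<le> real k * opnorm P ^ (k - 1) * opnorm Q * norm u"
    using Suc by (auto simp: z_def)
  have upper_step: "norm (upper_half (N *v z)) \<le> opnorm P * (opnorm P ^ k * norm u)"
    unfolding upper_half_mult
    by (intro order_trans[OF norm_matrix_vector_le] mult_left_mono up opnorm_nonneg)
  have "norm (lower_half (N *v z))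
      \<le> opnorm Q * (opnorm P ^ k * norm u) + opnorm P * (real k * opnorm P ^ (k - 1) * opnorm Q * norm u)"
    unfolding lower_half_mult
    by (intro order_trans[OF norm_triangle_ineq] add_mono
        order_trans[OF norm_matrix_vector_le] mult_left_mono up low opnorm_nonneg)
  also have "\<dots> = real (Suc k) * opnorm P ^ k * opnorm Q * norm u"
    by (cases k) (simp_all add: algebra_simps)
  finally have lower_step:
    "norm (lower_half (N *v z)) \<le> real (Suc k) * opnorm P ^ k * opnorm Q * norm u" .
  have "matpow N (Suc k) *v embed_upper u = N *v z"
    by (simp add: z_def matrix_vector_mul_assoc)
  with upper_step lower_step show ?case
    by (simp add: mult_ac)
qed

lemma opnorm_mphi_lower_left_le:
  "opnorm ((\<chi> i j. mphi N $ Inr i $ Inl j) :: complex^'r^'r) \<le> deriv phi (opnorm P) * opnorm Q"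
proof (rule opnorm_le)
  fix u :: "complex^'r"
  have block: "(\<chi> i j. mphi N $ Inr i $ Inl j) *v u = lower_half (mphi N *v embed_upper u)"
    by (simp add: lower_half_def embed_upper_def matrix_vector_mult_def vec_eq_iff sum_UNIV_Plus)
  have "(\<lambda>k. phi_coeff k *\<^sub>R lower_half (matpow N k *v embed_upper u)) sums lower_half (mphi N *v embed_upper u)"
    using bounded_linear.sums[OF bounded_linear_lower_half mphi_vector_sums[of N "embed_upper u"]]
    by (simp add: linear_simps(5)[OF bounded_linear_lower_half])
  moreover have "(\<lambda>k. real k * phi_coeff k * opnorm P ^ (k - 1) * (opnorm Q * norm u))
      sums (deriv phi (opnorm P) * (opnorm Q * norm u))"
    by (intro sums_mult2 deriv_phi_sums)
  moreover have "norm (phi_coeff k *\<^sub>R lower_half (matpow N k *v embed_upper u))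
      \<le> real k * phi_coeff k * opnorm P ^ (k - 1) * (opnorm Q * norm u)" for k
    using mult_left_mono[OF conjunct2[OF norm_matpow_embed_upper_le[of k u]] phi_coeff_nonneg[of k]]
    by (simp add: phi_coeff_nonneg mult_ac)
  ultimately have "norm (lower_half (mphi N *v embed_upper u)) \<le> deriv phi (opnorm P) * (opnorm Q * norm u)"
    by (rule norm_sums_le)
  thus "norm ((\<chi> i j. mphi N $ Inr i $ Inl j) *v u) \<le> deriv phi (opnorm P) * opnorm Q * norm u"
    by (simp add: block mult.assoc)
qed

end

type_synonym 'k mmat = "complex^('k \<times> bool)^('k \<times> bool)"

definition swap_pair :: "'k \<times> bool \<Rightarrow> 'k \<times> bool" where
  "swap_pair u = (fst u, \<not> snd u)"

lemma Jmat_entry: "(Jmat :: 'k::finite mmat) $ (a, b) $ (a', b') = (if a = a' then complex_of_real (Jblk b b') else 0)"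
  by (simp add: Jmat_def)

lemma Jmat_vector_mult:
  "((Jmat :: 'k::finite mmat) *v v) $ u = (if snd u then - v $ swap_pair u else v $ swap_pair u)"
proof -
  have "((Jmat :: 'k mmat) *v v) $ u = (\<Sum>u'\<in>UNIV. if u' = swap_pair u then Jmat $ u $ u' * v $ u' else 0)"
    unfolding matrix_vector_mult_def vec_lambda_beta
  proof (intro sum.cong refl)
    fix u' :: "'k \<times> bool"
    show "Jmat $ u $ u' * v $ u' = (if u' = swap_pair u then Jmat $ u $ u' * v $ u' else 0)"
      by (cases u; cases u') (auto simp: Jmat_entry swap_pair_def Jblk_def)
  qed
  thus ?thesis
    by (cases u) (simp add: Jmat_entry swap_pair_def Jblk_def)
qed

lemma opnorm_Jmat: "opnorm (Jmat :: 'k::finite mmat) \<le> 1"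
proof (rule opnorm_le)
  fix v :: "complex^('k \<times> bool)"
  have "norm (((Jmat :: 'k mmat) *v v) $ u) = norm (v $ swap_pair u)" for u
    by (simp add: Jmat_vector_mult)
  then have "(norm ((Jmat :: 'k mmat) *v v))\<^sup>2 = (\<Sum>u\<in>UNIV. (norm (v $ swap_pair u))\<^sup>2)"
    by (simp add: norm_vec_power2)
  also have "\<dots> = (norm v)\<^sup>2"
    unfolding norm_vec_power2
    by (rule sum.reindex_bij_witness[of _ swap_pair swap_pair]) (simp_all add: swap_pair_def)
  finally show "norm (Jmat *v v) \<le> 1 * norm v"
    by (simp add: power2_eq_iff_nonneg)
qed

lemma Jmat_skew: "(Jmat :: 'k::finite mmat) $ u $ w = - Jmat $ w $ u"
  by (cases u; cases w) (auto simp: Jmat_entry Jblk_def)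

lemma cadj_Jmat: "cadj (Jmat :: 'k::finite mmat) = - Jmat"
proof -
  have "cnj ((Jmat :: 'k mmat) $ u $ w) = Jmat $ u $ w" for u w
    by (cases u; cases w) (auto simp: Jmat_entry Jblk_def)
  thus ?thesis
    by (simp add: cadj_def vec_eq_iff) (metis Jmat_skew)
qed

lemma hermitian_Omega: "hermitian (Omega :: 'k::finite mmat)"
proof -
  have "cadj (Omega :: 'k mmat) = mat 1 + mat (- \<i>) ** (- Jmat)"
    by (simp add: Omega_def cadj_add cadj_mat cadj_mat_mult cadj_Jmat)
  also have "\<dots> = Omega"
    by (simp add: Omega_def matrix_mult_uminus_right mat_mult_eq vec_eq_iff)
  finally show ?thesis
    by (simp add: hermitian_def)
qed

lemma hermitian_Smat: "hermitian (Smat :: 'k::finite mmat)"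
  using hermitian_Omega[where 'k='k]
  by (simp add: hermitian_def Smat_def cadj_def transpose_def vec_eq_iff)

lemma opnorm_Smat: "opnorm (Smat :: 'k::finite mmat) \<le> sqrt 2"
proof -
  have "opnorm (Omega :: 'k mmat) \<le> opnorm (mat 1 :: 'k mmat) + norm \<i> * opnorm (Jmat :: 'k mmat)"
    unfolding Omega_def by (intro order_trans[OF opnorm_add] add_mono opnorm_mat_mult order_refl)
  also have "\<dots> \<le> 2"
    using opnorm_mat[of 1, where 'n="'k \<times> bool"] opnorm_Jmat[where 'k='k] by simp
  finally have Omega_le: "opnorm (Omega :: 'k mmat) \<le> 2" .
  have "opnorm (Smat :: 'k mmat) \<le> \<bar>1 / sqrt 2\<bar> * opnorm (transpose (Omega :: 'k mmat))"
    unfolding Smat_def by (rule opnorm_scaleR)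
  also have "\<dots> \<le> 1 / sqrt 2 * 2"
    using order_trans[OF opnorm_transpose Omega_le] by (simp add: divide_right_mono)
  also have "(1 / sqrt 2) * 2 = sqrt (2::real)"
    by (simp add: field_simps)
  finally show ?thesis .
qed

abbreviation Pmat :: "real \<Rightarrow> complex^('k::finite \<times> bool)^'r::finite \<Rightarrow> complex^'r^'r" where
  "Pmat \<theta> F \<equiv> mat (2 * \<i> * complex_of_real \<theta>) ** Psi F"

lemma cadj_Psi: "cadj (Psi (F::complex^('k::finite \<times> bool)^'r::finite)) = - Psi F"
  by (simp add: Psi_def cadj_mult cadj_Jmat matrix_mult_uminus_left matrix_mult_uminus_right
      matrix_mul_assoc)

lemma hermitian_Pmat: "hermitian (Pmat \<theta> F)"
  unfolding hermitian_def cadj_mat_mult cadj_Psi by (simp add: mat_mult_eq vec_eq_iff)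

lemma opnorm_Pmat:
  assumes "0 \<le> \<theta>"
  shows "opnorm (Pmat \<theta> (F::complex^('k::finite \<times> bool)^'r::finite)) \<le> 2 * \<theta> * (opnorm F)\<^sup>2"
proof -
  have "opnorm (Psi F) \<le> opnorm F * opnorm (Jmat :: 'k mmat) * opnorm F"
    unfolding Psi_def by (intro order_trans[OF opnorm_mult3] mult_left_mono opnorm_cadj) (simp_all add: opnorm_nonneg)
  also have "\<dots> \<le> (opnorm F)\<^sup>2"
    using mult_right_mono[OF mult_left_mono[OF opnorm_Jmat opnorm_nonneg] opnorm_nonneg]
    by (simp add: power2_eq_square)
  finally have "opnorm (Psi F) \<le> (opnorm F)\<^sup>2" .
  then show ?thesis
    using assms by (intro order_trans[OF opnorm_mat_mult]) (simp add: norm_mult mult_left_mono)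
qed

lemma hermitian_Delta: "hermitian (Delta \<theta> (F::complex^('k::finite \<times> bool)^'r::finite))"
proof -
  have "cadj (Sigma \<theta> F) = Sigma \<theta> F"
    using hermitian_Smat[where 'k='k] hermitian_mphi[OF hermitian_Pmat, of \<theta> F]
    by (simp add: Sigma_def hermitian_def cadj_mult matrix_mul_assoc)
  then show ?thesis
    by (simp add: hermitian_def Delta_def cadj_diff cadj_mat cadj_mult mat_mult_commute)
qed

lemma opnorm_Delta:
  assumes "0 \<le> \<theta>"
  shows "opnorm (Delta \<theta> (F::complex^('k::finite \<times> bool)^'r::finite))
    \<le> 1 + \<theta> * (2 * (opnorm F)\<^sup>2 * phi (opnorm (Pmat \<theta> F)))"
proof -
  let ?S = "Smat :: 'k mmat"
  have "opnorm (Sigma \<theta> F) \<le> opnorm ?S * opnorm (cadj F) * opnorm (mphi (Pmat \<theta> F)) * opnorm F * opnorm ?S"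
    unfolding Sigma_def by (rule opnorm_mult5)
  also have "\<dots> \<le> sqrt 2 * opnorm F * phi (opnorm (Pmat \<theta> F)) * opnorm F * sqrt 2"
    by (intro mult_mono opnorm_Smat opnorm_cadj opnorm_mphi opnorm_nonneg mult_nonneg_nonneg
        phi_nonneg order_refl) auto
  also have "\<dots> = 2 * (opnorm F)\<^sup>2 * phi (opnorm (Pmat \<theta> F))"
    by (simp add: power2_eq_square mult_ac)
  finally have "opnorm (Sigma \<theta> F) \<le> \<dots>" .
  then show ?thesis
    unfolding Delta_def using assms opnorm_mat[of 1, where 'n="'k \<times> bool"]
    by (intro order_trans[OF opnorm_diff] add_mono order_trans[OF opnorm_mat_mult] mult_mono)
      (auto simp: opnorm_nonneg)
qed

lemma opnorm_inv_Delta_sandwich: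
  assumes "L > 0" "L \<le> lambda_min (Delta \<theta> F)"
  shows "opnorm (Smat ** matrix_inv (Delta \<theta> (F::complex^('k::finite \<times> bool)^'r::finite)) ** Smat) \<le> 2 / L"
proof -
  have "L * norm v \<le> norm (Delta \<theta> F *v v)" for v
    using hermitian_lambda_min_norm_le[OF hermitian_Delta, of \<theta> F v]
      mult_right_mono[OF assms(2) norm_ge_zero[of v]]
    by linarith
  then have "opnorm (matrix_inv (Delta \<theta> F)) \<le> 1 / L"
    by (rule opnorm_matrix_inv_le[OF assms(1)])
  then have "opnorm (Smat ** matrix_inv (Delta \<theta> F) ** Smat) \<le> sqrt 2 * (1 / L) * sqrt 2"
    by (intro order_trans[OF opnorm_mult3] mult_mono opnorm_Smat opnorm_nonneg mult_nonneg_nonneg)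
      (use assms in auto)
  then show ?thesis
    by simp
qed

lemma opnorm_varpi:
  assumes "L > 0" "L \<le> lambda_min (Delta \<theta> F)"
  shows "opnorm (varpi \<theta> (F::complex^('k::finite \<times> bool)^'r::finite))
    \<le> deriv phi (opnorm (Pmat \<theta> F)) * (2 * (opnorm F)\<^sup>2 / L)"
proof -
  let ?Q = "F ** Smat ** matrix_inv (Delta \<theta> F) ** Smat ** cadj F"
  interpret block_lower_triangular "blockM \<theta> F" "Pmat \<theta> F" ?Q
    by unfold_locales (simp_all add: blockM_def Let_def)
  have "?Q = F ** (Smat ** matrix_inv (Delta \<theta> F) ** Smat) ** cadj F"
    by (simp add: matrix_mul_assoc)
  then have "opnorm ?Q \<le> opnorm F * opnorm (Smat ** matrix_inv (Delta \<theta> F) ** Smat) * opnorm (cadj F)"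
    by (simp only: opnorm_mult3)
  also have "\<dots> \<le> opnorm F * (2 / L) * opnorm F"
    using assms by (intro mult_mono opnorm_inv_Delta_sandwich opnorm_cadj opnorm_nonneg)
      (simp_all add: opnorm_nonneg)
  finally have "opnorm ?Q \<le> 2 * (opnorm F)\<^sup>2 / L"
    by (simp add: power2_eq_square mult_ac)
  then show ?thesis
    unfolding varpi_def
    by (intro order_trans[OF opnorm_mphi_lower_left_le] mult_left_mono deriv_phi_nonneg opnorm_nonneg)
qed

lemma onorm_Mop_le:
  fixes F :: "complex^('k::finite \<times> bool)^'r::finite"
  assumes "\<theta> > 0" "L > 0" "L \<le> lambda_min (Delta \<theta> F)"
  defines "p \<equiv> opnorm (Pmat \<theta> F)"
  shows "onorm (Mop \<theta> F) \<le> 2 / L * (phi p + deriv phi p * (2 * \<theta> * (opnorm F)\<^sup>2))"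
proof (rule onorm_le)
  fix X :: "complex^('k \<times> bool)^'r"
  let ?SDS = "Smat ** matrix_inv (Delta \<theta> F) ** Smat"
  let ?J = "mat (2 * \<i> * complex_of_real \<theta>) ** (Jmat :: 'k mmat)"
  have "opnorm (transpose ?J) \<le> norm (2 * \<i> * complex_of_real \<theta>) * 1"
    by (intro order_trans[OF opnorm_transpose] order_trans[OF opnorm_mat_mult] mult_left_mono
        opnorm_Jmat) auto
  then have J_le: "opnorm (transpose ?J) \<le> 2 * \<theta>"
    using assms(1) by (simp add: norm_mult)
  have first: "norm (mphi (Pmat \<theta> F) ** X ** ?SDS) \<le> phi p * norm X * (2 / L)"
    unfolding p_def
    by (intro order_trans[OF norm_sandwich_le] mult_mono opnorm_mphi mult_nonneg_nonneg phi_nonneg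
        order_trans[OF opnorm_transpose opnorm_inv_Delta_sandwich[OF assms(2,3)]] opnorm_nonneg
        norm_ge_zero order_refl)
  have second: "norm (varpi \<theta> F ** X ** ?J) \<le> deriv phi p * (2 * (opnorm F)\<^sup>2 / L) * norm X * (2 * \<theta>)"
    unfolding p_def
    by (intro order_trans[OF norm_sandwich_le] mult_mono opnorm_varpi[OF assms(2,3)] J_le
        mult_nonneg_nonneg deriv_phi_nonneg opnorm_nonneg norm_ge_zero order_refl)
      (use assms(2) in simp_all)
  have "Mop \<theta> F X = mphi (Pmat \<theta> F) ** X ** ?SDS + varpi \<theta> F ** X ** ?J"
    by (simp add: Mop_def matrix_mul_assoc)
  then have "norm (Mop \<theta> F X) \<le> norm (mphi (Pmat \<theta> F) ** X ** ?SDS) + norm (varpi \<theta> F ** X ** ?J)"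
    by (simp only: norm_triangle_ineq)
  also have "\<dots> \<le> phi p * norm X * (2 / L) + deriv phi p * (2 * (opnorm F)\<^sup>2 / L) * norm X * (2 * \<theta>)"
    by (rule add_mono[OF first second])
  also have "\<dots> = 2 / L * (phi p + deriv phi p * (2 * \<theta> * (opnorm F)\<^sup>2)) * norm X"
    by (simp add: algebra_simps)
  finally show "norm (Mop \<theta> F X) \<le> 2 / L * (phi p + deriv phi p * (2 * \<theta> * (opnorm F)\<^sup>2)) * norm X" .
qed

lemma onorm_Mop_le_vartheta:
  fixes F :: "complex^('k::finite \<times> bool)^'r::finite"
  assumes "\<theta> > 0" "L > 0" "L \<le> lambda_min (Delta \<theta> F)" "opnorm F \<le> s"
  shows "onorm (Mop \<theta> F) \<le> 2 * vartheta CARD('r) (2 * \<theta> * s\<^sup>2) / L"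
proof -
  let ?p = "opnorm (Pmat \<theta> F)" and ?b = "2 * \<theta> * (opnorm F)\<^sup>2" and ?a = "2 * \<theta> * s\<^sup>2"
  have b_le_a: "?b \<le> ?a"
    using assms(1,4) opnorm_nonneg[of F] by (simp add: power_mono)
  have p_le_b: "?p \<le> ?b"
    using assms(1) by (simp add: opnorm_Pmat)
  have "phi ?p + deriv phi ?p * ?b \<le> vartheta CARD('r) ?a"
    by (rule phi_add_deriv_le_vartheta[OF opnorm_nonneg order_trans[OF p_le_b b_le_a] _ b_le_a])
      (use assms(1) in simp_all)
  then have "2 / L * (phi ?p + deriv phi ?p * ?b) \<le> 2 / L * vartheta CARD('r) ?a"
    using assms(2) by (intro mult_left_mono) simp_all
  then show ?thesis
    using onorm_Mop_le[OF assms(1-3)] by (simp only: times_divide_eq_left mult.commute[of _ 2])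
qed

lemma hurwitz_resolvent_nonsingular:
  assumes "hurwitz A" "v \<noteq> 0"
  shows "(mat (\<i> * complex_of_real w) - cmat A) *v v \<noteq> 0"
proof
  assume "(mat (\<i> * complex_of_real w) - cmat A) *v v = 0"
  then have "cmat A *v v = (\<i> * complex_of_real w) *s v"
    by (simp add: matrix_vector_mult_diff_rdistrib mat_vector_mult)
  with assms show False
    unfolding hurwitz_def by force
qed

lemma norm_resolvent_ge_one:
  assumes "norm v = 1" "opnorm K + 1 \<le> \<bar>w\<bar>"
  shows "1 \<le> norm ((mat (\<i> * complex_of_real w) - K) *v (v::complex^'n))"
proof -
  have "1 \<le> \<bar>w\<bar> - norm (K *v v)"
    using assms norm_matrix_vector_le[of K v] by simp
  also have "\<dots> \<le> norm ((\<i> * complex_of_real w) *s v - K *v v)"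
    using norm_triangle_ineq2[of "(\<i> * complex_of_real w) *s v" "K *v v"] assms
    by (simp add: norm_vector_smult norm_mult)
  finally show ?thesis
    by (simp add: matrix_vector_mult_diff_rdistrib mat_vector_mult)
qed

text \<open>Compactness handles bounded frequencies; for large \<open>|w|\<close> the term \<open>i w v\<close> dominates.\<close>

lemma hurwitz_resolvent_lower_bound:
  fixes A :: "real^'n::finite^'n"
  assumes "hurwitz A"
  obtains c where "c > 0" "\<And>w v. c * norm v \<le> norm ((mat (\<i> * complex_of_real w) - cmat A) *v v)"
proof -
  define K where "K = cmat A"
  define g where "g = (\<lambda>x::real \<times> (complex^'n). norm (fst x *\<^sub>R (mat \<i> *v snd x) - K *v snd x))"
  have g_eq: "g (w, v) = norm ((mat (\<i> * complex_of_real w) - K) *v v)" for w v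
    by (simp add: g_def matrix_vector_mult_diff_rdistrib mat_vector_mult scaleR_conv_vector_smult
        vector_smult_assoc mult.commute)
  define R where "R = opnorm K + 1"
  define T where "T = {-R..R} \<times> sphere (0::complex^'n) 1"
  have "compact T"
    unfolding T_def by (intro compact_Times compact_Icc compact_sphere)
  moreover have "T \<noteq> {}"
    unfolding T_def R_def using opnorm_nonneg[of K] by auto
  moreover have "continuous_on T g"
    unfolding g_def
    by (intro continuous_intros bounded_linear.continuous_on[OF matrix_vector_mul_bounded_linear])
  ultimately obtain x0 where x0: "x0 \<in> T" and min: "\<And>y. y \<in> T \<Longrightarrow> g x0 \<le> g y"
    using continuous_attains_inf[of T g] by blast
  obtain w0 v0 where x0_eq: "x0 = (w0, v0)"
    by (cases x0)
  have "v0 \<noteq> 0"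
    using x0 by (auto simp: T_def x0_eq)
  then have "g x0 > 0"
    using hurwitz_resolvent_nonsingular[OF assms, of v0 w0] by (simp add: x0_eq g_eq K_def)
  define c where "c = min (g x0) 1"
  have "c \<le> norm ((mat (\<i> * complex_of_real w) - K) *v v)" if "norm v = 1" for w v
  proof (cases "\<bar>w\<bar> \<le> R")
    case True
    then show ?thesis
      using min[of "(w, v)"] that by (simp add: c_def T_def abs_le_iff min.coboundedI1 flip: g_eq)
  next
    case False
    then show ?thesis
      using norm_resolvent_ge_one[OF that, of K w] by (simp add: c_def R_def)
  qed
  moreover have "c > 0"
    using \<open>g x0 > 0\<close> by (simp add: c_def)
  ultimately show ?thesis
    using that norm_matrix_vector_ge_of_sphere by (metis K_def)
qed

lemma bounded_Ffun:
  fixes A :: "real^'n::finite^'n" and B :: "real^'m::finite^'n" and C :: "real^'n^'r::finite"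
  assumes "hurwitz A"
  obtains K where "\<And>w. opnorm (Ffun A B C w) \<le> K"
proof -
  obtain c where c: "c > 0"
    and lower: "\<And>w v. c * norm v \<le> norm ((mat (\<i> * complex_of_real w) - cmat A) *v v)"
    using hurwitz_resolvent_lower_bound[OF assms] by blast
  have "opnorm (Ffun A B C w) \<le> opnorm (cmat C) * (1 / c) * opnorm (cmat B)" for w
    unfolding Ffun_def Gfun_def
    by (intro order_trans[OF opnorm_mult3] mult_mono opnorm_matrix_inv_le[OF c lower]
        mult_nonneg_nonneg opnorm_nonneg order_refl) (use c in auto)
  then show ?thesis
    using that by blast
qed

lemma bdd_below_lambda_min_Delta:
  fixes F :: "real \<Rightarrow> complex^('k::finite \<times> bool)^'r::finite"
  assumes "0 \<le> \<theta>" and K: "\<And>w. opnorm (F w) \<le> K"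
  shows "bdd_below (range (\<lambda>w. lambda_min (Delta \<theta> (F w))))"
proof (rule bdd_belowI2)
  fix w
  have F2: "(opnorm (F w))\<^sup>2 \<le> K\<^sup>2"
    using K[of w] opnorm_nonneg[of "F w"] by (simp add: power_mono)
  have "opnorm (Pmat \<theta> (F w)) \<le> 2 * \<theta> * K\<^sup>2"
    using opnorm_Pmat[OF assms(1), of "F w"] F2 assms(1) by (smt (verit) mult_left_mono)
  then have "phi (opnorm (Pmat \<theta> (F w))) \<le> phi (2 * \<theta> * K\<^sup>2)"
    by (rule phi_mono[OF opnorm_nonneg])
  then have "opnorm (Delta \<theta> (F w)) \<le> 1 + \<theta> * (2 * K\<^sup>2 * phi (2 * \<theta> * K\<^sup>2))"
    using F2 assms(1)
    by (intro order_trans[OF opnorm_Delta[OF assms(1)]] add_mono order_refl mult_left_mono mult_mono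
        phi_nonneg opnorm_nonneg) auto
  then show "- (1 + \<theta> * (2 * K\<^sup>2 * phi (2 * \<theta> * K\<^sup>2))) \<le> lambda_min (Delta \<theta> (F w))"
    using hermitian_lambda_min_ge[OF hermitian_Delta, of \<theta> "F w"] by linarith
qed

theorem lemma6p3:
  fixes A :: "real^'n::finite^'n" and B :: "real^('k::finite \<times> bool)^'n"
    and C :: "real^'n^'r::finite" and \<theta> :: real
  assumes "even CARD('n)"
    and "\<theta> > 0"
    and "hurwitz A"
    and "(INF w. lambda_min (Delta \<theta> (Ffun A B C w))) > 0"
  shows "\<forall>w. onorm (Mop \<theta> (Ffun A B C w))
      \<le> 2 * vartheta CARD('r)
              (2 * \<theta> * (SUP w'. onorm (\<lambda>v. Ffun A B C w' *v v))\<^sup>2)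
          / (INF w'. lambda_min (Delta \<theta> (Ffun A B C w')))"
proof
  fix w
  let ?F = "Ffun A B C"
  obtain K where K: "\<And>w. opnorm (?F w) \<le> K"
    using bounded_Ffun[OF assms(3)] by blast
  have "(INF w'. lambda_min (Delta \<theta> (?F w'))) \<le> lambda_min (Delta \<theta> (?F w))"
    by (rule cINF_lower[OF bdd_below_lambda_min_Delta[OF less_imp_le[OF assms(2)] K] UNIV_I])
  moreover have "opnorm (?F w) \<le> (SUP w'. opnorm (?F w'))"
    by (rule cSUP_upper[OF UNIV_I bdd_aboveI2[OF K]])
  ultimately have "onorm (Mop \<theta> (?F w))
      \<le> 2 * vartheta CARD('r) (2 * \<theta> * (SUP w'. opnorm (?F w'))\<^sup>2)
          / (INF w'. lambda_min (Delta \<theta> (?F w')))"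
    by (rule onorm_Mop_le_vartheta[OF assms(2,4)])
  then show "onorm (Mop \<theta> (?F w))
      \<le> 2 * vartheta CARD('r) (2 * \<theta> * (SUP w'. onorm (\<lambda>v. ?F w' *v v))\<^sup>2)
          / (INF w'. lambda_min (Delta \<theta> (?F w')))"
    by (simp only: opnorm_def)
qed

end
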